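(* Let $\omega\in\Bbbk\setminus\{0,1\}$ and let $\phi$ be the automorphism of $A$ with $\phi(x)=\omega x$, $\phi(y)=\omega^{N-1}y$. If $N=1$ then $\mathrm{H}^1(A,{}_\phi A)=0$. If $N\ge2$, then $\mathrm{H}^1(A,{}_\phi A)$ has Hilbert series $0$ when $\omega^{N-1}\ne1$, and $\dfrac{1}{t(1-t^{N-1})}$ when $\omega^{N-1}=1$.
   Context: Let $\Bbbk$ be a field of characteristic zero and $N\ge1$ an integer. Let $A=A_N$ be the $\Bbbk$-algebra generated by $x,y$ subject to $yx-xy=x^N$, graded with $x$ in degree $1$ and $y$ in degree $N-1$. For an automorphism $\phi$, a $\phi$-twisted derivation is a linear map $\partial:A\to A$ with $\partial(ab)=\partial(a)b+\phi(a)\partial(b)$; it is inner if of the form $a\mapsto ma-\phi(a)m$ for some $m\in A$. ${}_\phi A$ is $A$ with left action twisted by $\phi$, and $\mathrm{H}^1(A,{}_\phi A)$ is the quotient of $\phi$-twisted derivations by inner ones, graded by degree of homogeneous twisted derivations ($\partial(A_p)\subseteq A_{p+l}$), which makes sense since $\phi$ is homogeneous. *)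

theory Defs
  imports Main
begin

text \<open>Abstract presentation of the algebra A_N over a field k (type 'k):
  'a is a ring, emb : 'k -> 'a is the structure map (a central ring
  homomorphism, so 'a is a k-algebra with scalar action c . a = emb c * a),
  x, y satisfy y x - x y = x^N, and the monomials x^i y^j form a k-basis.\<close>

definition mono_comb :: "('k \<Rightarrow> 'a::ring_1) \<Rightarrow> 'a \<Rightarrow> 'a \<Rightarrow> (nat \<times> nat) set \<Rightarrow> (nat \<Rightarrow> nat \<Rightarrow> 'k) \<Rightarrow> 'a" where
  "mono_comb emb x y S c = (\<Sum>(i, j)\<in>S. emb (c i j) * x ^ i * y ^ j)"

definition is_k_algebra :: "('k::field \<Rightarrow> 'a::ring_1) \<Rightarrow> bool" where
  "is_k_algebra emb \<longleftrightarrow>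
     emb 1 = 1 \<and> (\<forall>a b. emb (a + b) = emb a + emb b) \<and>
     (\<forall>a b. emb (a * b) = emb a * emb b) \<and> (\<forall>c u. emb c * u = u * emb c)"

definition is_A_N :: "('k::field \<Rightarrow> 'a::ring_1) \<Rightarrow> nat \<Rightarrow> 'a \<Rightarrow> 'a \<Rightarrow> bool" where
  "is_A_N emb N x y \<longleftrightarrow>
     is_k_algebra emb \<and>
     y * x - x * y = x ^ N \<and>
     (\<forall>u. \<exists>S c. finite S \<and> u = mono_comb emb x y S c) \<and>
     (\<forall>S c. finite S \<longrightarrow> mono_comb emb x y S c = 0 \<longrightarrow> (\<forall>(i, j)\<in>S. c i j = 0))"

definition graded_piece :: "('k::field \<Rightarrow> 'a::ring_1) \<Rightarrow> nat \<Rightarrow> 'a \<Rightarrow> 'a \<Rightarrow> int \<Rightarrow> 'a set" where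
  "graded_piece emb N x y p =
     {u. \<exists>S c. finite S \<and> (\<forall>(i, j)\<in>S. int i + int (N - 1) * int j = p) \<and>
              u = mono_comb emb x y S c}"

definition k_linear :: "('k::field \<Rightarrow> 'a::ring_1) \<Rightarrow> ('a \<Rightarrow> 'a) \<Rightarrow> bool" where
  "k_linear emb f \<longleftrightarrow> (\<forall>u v. f (u + v) = f u + f v) \<and> (\<forall>c u. f (emb c * u) = emb c * f u)"

definition k_alg_aut :: "('k::field \<Rightarrow> 'a::ring_1) \<Rightarrow> ('a \<Rightarrow> 'a) \<Rightarrow> bool" where
  "k_alg_aut emb \<phi> \<longleftrightarrow> bij \<phi> \<and> k_linear emb \<phi> \<and> \<phi> 1 = 1 \<and> (\<forall>u v. \<phi> (u * v) = \<phi> u * \<phi> v)"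

definition twisted_der :: "('k::field \<Rightarrow> 'a::ring_1) \<Rightarrow> ('a \<Rightarrow> 'a) \<Rightarrow> ('a \<Rightarrow> 'a) \<Rightarrow> bool" where
  "twisted_der emb \<phi> d \<longleftrightarrow> k_linear emb d \<and> (\<forall>u v. d (u * v) = d u * v + \<phi> u * d v)"

definition inner_twisted :: "('a::ring_1 \<Rightarrow> 'a) \<Rightarrow> ('a \<Rightarrow> 'a) \<Rightarrow> bool" where
  "inner_twisted \<phi> d \<longleftrightarrow> (\<exists>m. \<forall>u. d u = m * u - \<phi> u * m)"

definition hom_der :: "('k::field \<Rightarrow> 'a::ring_1) \<Rightarrow> nat \<Rightarrow> 'a \<Rightarrow> 'a \<Rightarrow> ('a \<Rightarrow> 'a) \<Rightarrow> int \<Rightarrow> ('a \<Rightarrow> 'a) set" where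
  "hom_der emb N x y \<phi> l =
     {d. twisted_der emb \<phi> d \<and>
         (\<forall>p. \<forall>u\<in>graded_piece emb N x y p. d u \<in> graded_piece emb N x y (p + l))}"

definition hom_inner :: "('k::field \<Rightarrow> 'a::ring_1) \<Rightarrow> nat \<Rightarrow> 'a \<Rightarrow> 'a \<Rightarrow> ('a \<Rightarrow> 'a) \<Rightarrow> int \<Rightarrow> ('a \<Rightarrow> 'a) set" where
  "hom_inner emb N x y \<phi> l = {d \<in> hom_der emb N x y \<phi> l. inner_twisted \<phi> d}"

text \<open>dim_k (V / W) = n for a subspace W of a k-space V of maps 'a -> 'a
  (scalar action (c . f) u = emb c * f u): there are f_0..f_(n-1) in V whose
  classes modulo W are linearly independent and span V / W.\<close>
definition has_quot_dim :: "('k::field \<Rightarrow> 'a::ring_1) \<Rightarrow> ('a \<Rightarrow> 'a) set \<Rightarrow> ('a \<Rightarrow> 'a) set \<Rightarrow> nat \<Rightarrow> bool" where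
  "has_quot_dim emb V W n \<longleftrightarrow>
     (\<exists>fs. length fs = n \<and> set fs \<subseteq> V \<and>
        (\<forall>c::nat \<Rightarrow> 'k. (\<lambda>u. \<Sum>i<n. emb (c i) * (fs ! i) u) \<in> W \<longrightarrow> (\<forall>i<n. c i = 0)) \<and>
        (\<forall>f\<in>V. \<exists>c::nat \<Rightarrow> 'k. (\<lambda>u. f u - (\<Sum>i<n. emb (c i) * (fs ! i) u)) \<in> W))"

end

theory Submission
  imports Defs
begin

text \<open>
  Since \<open>m x = x (m + R)\<close> with \<open>R\<close> of lower \<open>y\<close>-degree,
  induction on the \<open>y\<close>-degree shows that for \<open>w \<noteq> 1\<close> the map \<open>m \<mapsto> m x - w x m\<close> is injective
  and its image contains \<open>x A\<close>. This map at \<open>w = \<omega>\<close> gives the values at \<open>x\<close> of the inner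
  derivations, and the defining relation shows that a twisted derivation is determined by its
  value at \<open>x\<close>. Hence a twisted derivation \<open>d\<close> is inner iff the \<open>x\<close>-free part \<open>a \<in> k[y]\<close>
  of \<open>d x\<close> vanishes. After subtracting an inner derivation, \<open>d x = a\<close>, and applying \<open>d\<close> to
  \<open>y x - x y = x ^ N\<close> puts \<open>(1 - \<omega> ^ (N - 1)) a y + d (x ^ N)\<close> into \<open>x A\<close>. For \<open>N = 1\<close>
  this element is \<open>a\<close>, and for \<open>N \<ge> 2\<close> we have \<open>d (x ^ N) \<in> x A\<close>; so \<open>a = 0\<close> unless
  \<open>N \<ge> 2\<close> and \<open>\<omega> ^ (N - 1) = 1\<close>. In that case a derivation of degree \<open>l\<close> has \<open>a = c y ^ k\<close> with
  \<open>(N - 1) k = l + 1\<close>, and a derivation with \<open>d x = y ^ k\<close> does exist: twisted derivations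
  correspond to algebra maps \<open>u \<mapsto> ((\<phi> u, d u), (0, u))\<close> into upper triangular matrices,
  which the universal property of \<open>A\<close> provides.
\<close>

datatype 'a utri = UTri (diag1: 'a) (corner: 'a) (diag2: 'a)

text \<open>\<open>UTri a b c\<close> is the upper triangular matrix with rows \<open>(a, b)\<close> and \<open>(0, c)\<close>.\<close>

instantiation utri :: (ring_1) ring_1
begin
definition "0 = UTri 0 0 0"
definition "1 = UTri 1 0 1"
definition "A + B = UTri (diag1 A + diag1 B) (corner A + corner B) (diag2 A + diag2 B)"
definition "A - B = UTri (diag1 A - diag1 B) (corner A - corner B) (diag2 A - diag2 B)"
definition "- A = UTri (- diag1 A) (- corner A) (- diag2 A)"
definition "A * B =
  UTri (diag1 A * diag1 B) (diag1 A * corner B + corner A * diag2 B) (diag2 A * diag2 B)"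
instance
  by standard (auto simp: zero_utri_def one_utri_def plus_utri_def minus_utri_def
      uminus_utri_def times_utri_def algebra_simps intro: utri.expand)
end

lemma UTri_mult [simp]: "UTri a b c * UTri a' b' c' = UTri (a * a') (a * b' + b * c') (c * c')"
  and UTri_add [simp]: "UTri a b c + UTri a' b' c' = UTri (a + a') (b + b') (c + c')"
  and UTri_diff [simp]: "UTri a b c - UTri a' b' c' = UTri (a - a') (b - b') (c - c')"
  by (simp_all add: times_utri_def plus_utri_def minus_utri_def)

lemma utri_sel_0 [simp]: "diag1 0 = 0" "corner 0 = 0" "diag2 0 = 0"
  and utri_sel_add [simp]: "diag1 (A + B) = diag1 A + diag1 B" "corner (A + B) = corner A + corner B"
    "diag2 (A + B) = diag2 A + diag2 B"
  and utri_sel_mult [simp]: "diag1 (A * B) = diag1 A * diag1 B"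
    "corner (A * B) = diag1 A * corner B + corner A * diag2 B" "diag2 (A * B) = diag2 A * diag2 B"
  by (simp_all add: zero_utri_def plus_utri_def times_utri_def)

text \<open>For a \<open>\<phi>\<close>-twisted derivation \<open>d\<close>, \<open>d (x ^ n) = der_power (\<phi> x) (d x) x n\<close>.\<close>

primrec der_power :: "'a::ring_1 \<Rightarrow> 'a \<Rightarrow> 'a \<Rightarrow> nat \<Rightarrow> 'a" where
  "der_power p a q 0 = 0"
| "der_power p a q (Suc n) = p * der_power p a q n + a * q ^ n"

lemma UTri_power: "UTri p a q ^ n = UTri (p ^ n) (der_power p a q n) (q ^ n)"
  by (induction n) (simp_all add: one_utri_def)

lemma twisted_der_add: "twisted_der emb \<phi> d \<Longrightarrow> d (u + v) = d u + d v"
  and twisted_der_scale: "twisted_der emb \<phi> d \<Longrightarrow> d (emb c * u) = emb c * d u"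
  and twisted_der_mult: "twisted_der emb \<phi> d \<Longrightarrow> d (u * v) = d u * v + \<phi> u * d v"
  unfolding twisted_der_def k_linear_def by blast+

lemma twisted_der_one: "twisted_der emb \<phi> d \<Longrightarrow> \<phi> 1 = 1 \<Longrightarrow> d 1 = 0"
  using twisted_der_mult[of emb \<phi> d 1 1] by simp

lemma has_quot_dim_0:
  assumes "V \<subseteq> W"
  shows "has_quot_dim emb V W 0"
  unfolding has_quot_dim_def using assms by (intro exI[of _ "[]"]) auto

lemma has_quot_dim_1:
  fixes emb :: "'k::field \<Rightarrow> 'a::ring_1"
  assumes "D \<in> V"
    and "\<And>c. (\<lambda>u. emb c * D u) \<in> W \<Longrightarrow> c = 0"
    and "\<And>f. f \<in> V \<Longrightarrow> \<exists>c. (\<lambda>u. f u - emb c * D u) \<in> W"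
  shows "has_quot_dim emb V W 1"
  unfolding has_quot_dim_def
proof (intro exI[of _ "[D]"] conjI allI impI ballI)
  fix c :: "nat \<Rightarrow> 'k" and i :: nat assume "(\<lambda>u. \<Sum>i<1. emb (c i) * ([D] ! i) u) \<in> W" "i < 1"
  then show "c i = 0" using assms(2)[of "c 0"] by simp
next
  fix f assume "f \<in> V"
  then obtain c where "(\<lambda>u. f u - emb c * D u) \<in> W" using assms(3) by blast
  then show "\<exists>c. (\<lambda>u. f u - (\<Sum>i<1. emb (c i) * ([D] ! i) u)) \<in> W"
    by (intro exI[of _ "\<lambda>_. c"]) simp
qed (use assms(1) in simp_all)

lemma comm_rel_power:
  fixes X Y :: "'b::ring_1"
  assumes rel: "Y * X - X * Y = X ^ N" and "N \<ge> 1"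
  shows "Y * X ^ i = X ^ i * Y + of_nat i * X ^ (i + N - 1)"
proof (induction i)
  case (Suc i)
  have rel': "Y * X = X * Y + X ^ N" using rel by (simp add: algebra_simps)
  have pow: "X ^ (i + N - 1) * X = X ^ (i + N)"
    using \<open>N \<ge> 1\<close> by (metis Suc_diff_1 add_gr_0 less_le_trans power_Suc2 zero_less_one)
  have "Y * X ^ Suc i = (Y * X ^ i) * X" by (simp only: power_Suc2 mult.assoc)
  also have "\<dots> = X ^ i * (Y * X) + of_nat i * (X ^ (i + N - 1) * X)"
    using Suc by (simp add: algebra_simps)
  also have "\<dots> = X ^ Suc i * Y + X ^ (i + N) + of_nat i * X ^ (i + N)"
    by (simp only: rel' pow distrib_left mult.assoc[symmetric] power_Suc2 power_add)
  also have "\<dots> = X ^ Suc i * Y + of_nat (Suc i) * X ^ (Suc i + N - 1)"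
    by (simp add: distrib_right)
  finally show ?case .
qed simp

locale k_algebra =
  fixes emb :: "'k::field \<Rightarrow> 'a::ring_1"
  assumes is_k_algebra: "is_k_algebra emb"
begin

lemma emb_1 [simp]: "emb 1 = 1"
  and emb_add [simp]: "emb (a + b) = emb a + emb b"
  and emb_mult [simp]: "emb (a * b) = emb a * emb b"
  and emb_central: "emb c * u = u * emb c"
  using is_k_algebra unfolding is_k_algebra_def by blast+

lemma emb_0 [simp]: "emb 0 = 0"
  using emb_add[of 0 0] by simp

lemma emb_uminus [simp]: "emb (- a) = - emb a"
proof -
  have "emb a + emb (- a) = 0" by (simp only: emb_add[symmetric]) simp
  then show ?thesis by (simp add: minus_unique)
qed

lemma emb_diff: "emb (a - b) = emb a - emb b"
  by (simp only: diff_conv_add_uminus emb_add emb_uminus)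

lemma emb_of_nat [simp]: "emb (of_nat n) = of_nat n"
  by (induction n) simp_all

lemma mult_emb_left: "u * (emb a * v) = emb a * (u * v)"
  by (simp only: mult.assoc[symmetric] emb_central[of a u])

lemma emb_inverse_cancel: "c \<noteq> 0 \<Longrightarrow> emb (inverse c) * (emb c * u) = u"
  by (simp only: mult.assoc[symmetric] emb_mult[symmetric]) simp

lemma k_algebra_UTri: "k_algebra (\<lambda>c. UTri (emb c) 0 (emb c))"
proof -
  have "UTri (emb c) 0 (emb c) * U = U * UTri (emb c) 0 (emb c)" for c U
    by (cases U) (simp add: emb_central)
  then show ?thesis unfolding k_algebra_def is_k_algebra_def by (simp add: one_utri_def)
qed

lemma twisted_der_0: "twisted_der emb \<phi> d \<Longrightarrow> d 0 = 0"
  using twisted_der_scale[of emb \<phi> d 0 0] by simp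

lemma twisted_der_diff:
  assumes "twisted_der emb \<phi> d" "twisted_der emb \<phi> d'"
  shows "twisted_der emb \<phi> (\<lambda>u. d u - d' u)"
  unfolding twisted_der_def k_linear_def
proof (intro conjI allI)
  fix u v
  show "d (u + v) - d' (u + v) = d u - d' u + (d v - d' v)"
    by (simp only: twisted_der_add[OF assms(1)] twisted_der_add[OF assms(2)]) simp
  show "d (u * v) - d' (u * v) = (d u - d' u) * v + \<phi> u * (d v - d' v)"
    by (simp only: twisted_der_mult[OF assms(1)] twisted_der_mult[OF assms(2)]) (simp add: algebra_simps)
next
  fix c u
  show "d (emb c * u) - d' (emb c * u) = emb c * (d u - d' u)"
    by (simp only: twisted_der_scale[OF assms(1)] twisted_der_scale[OF assms(2)]
        right_diff_distrib)
qed

lemma twisted_der_smult: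
  assumes "twisted_der emb \<phi> d"
  shows "twisted_der emb \<phi> (\<lambda>u. emb c * d u)"
  unfolding twisted_der_def k_linear_def
proof (intro conjI allI)
  fix u v
  show "emb c * d (u + v) = emb c * d u + emb c * d v"
    by (simp only: twisted_der_add[OF assms] distrib_left)
  show "emb c * d (u * v) = emb c * d u * v + \<phi> u * (emb c * d v)"
    by (simp only: twisted_der_mult[OF assms] distrib_left mult.assoc mult_emb_left[of "\<phi> u" c])
next
  fix a u
  show "emb c * d (emb a * u) = emb a * (emb c * d u)"
    by (simp only: twisted_der_scale[OF assms] mult_emb_left[of "emb c" a])
qed

end

locale A_N =
  fixes emb :: "'k::field \<Rightarrow> 'a::ring_1" and N :: nat and x y :: 'a
  assumes is_A_N: "is_A_N emb N x y" and N_pos: "N \<ge> 1"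
begin

sublocale k_algebra emb
  using is_A_N unfolding is_A_N_def by unfold_locales blast

abbreviation comb :: "(nat \<times> nat) set \<Rightarrow> (nat \<Rightarrow> nat \<Rightarrow> 'k) \<Rightarrow> 'a" where
  "comb \<equiv> mono_comb emb x y"

lemma yx_minus_xy: "y * x - x * y = x ^ N"
  using is_A_N unfolding is_A_N_def by blast

lemma y_mult_x: "y * x = x * y + x ^ N"
  using yx_minus_xy by (simp add: algebra_simps)

lemma y_mult_x_power: "y * x ^ i = x ^ i * y + of_nat i * x ^ (i + N - 1)"
  by (rule comm_rel_power[OF yx_minus_xy N_pos])

lemma ex_comb: "\<exists>S c. finite S \<and> u = comb S c"
  using is_A_N unfolding is_A_N_def by blast

lemma comb_eq_0D: "finite S \<Longrightarrow> comb S c = 0 \<Longrightarrow> (i, j) \<in> S \<Longrightarrow> c i j = 0"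
  using is_A_N unfolding is_A_N_def by fastforce

lemma comb_lincomb: "comb S (\<lambda>i j. a * c i j + b * c' i j) = emb a * comb S c + emb b * comb S c'"
  unfolding mono_comb_def
  by (simp add: case_prod_beta' sum_distrib_left sum.distrib algebra_simps)

lemma comb_mono_neutral:
  "finite S' \<Longrightarrow> S \<subseteq> S' \<Longrightarrow> (\<And>i j. (i, j) \<in> S' - S \<Longrightarrow> c i j = 0) \<Longrightarrow> comb S' c = comb S c"
  unfolding mono_comb_def by (rule sum.mono_neutral_right) auto

lemma comb_restrict: "comb S (\<lambda>i j. if (i, j) \<in> S then c i j else 0) = comb S c"
  unfolding mono_comb_def by (rule sum.cong) auto

lemma comb_coeffs_unique:
  assumes "finite S" "finite S'" "\<And>i j. (i, j) \<notin> S \<Longrightarrow> c i j = 0"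
    "\<And>i j. (i, j) \<notin> S' \<Longrightarrow> c' i j = 0" "comb S c = comb S' c'"
  shows "c = c'"
proof (intro ext)
  fix i j
  let ?T = "S \<union> S'"
  have "comb ?T c = comb S c" "comb ?T c' = comb S' c'"
    by (rule comb_mono_neutral; use assms in auto)+
  then have "comb ?T (\<lambda>i j. 1 * c i j + (-1) * c' i j) = 0"
    using assms(5) by (simp only: comb_lincomb) simp
  then have "(i, j) \<in> ?T \<Longrightarrow> c i j = c' i j"
    using comb_eq_0D[of ?T] assms(1,2) by fastforce
  then show "c i j = c' i j" using assms(3,4) by (cases "(i, j) \<in> ?T") auto
qed

definition coeff :: "'a \<Rightarrow> nat \<Rightarrow> nat \<Rightarrow> 'k" where
  "coeff u = (THE c. \<exists>S. finite S \<and> (\<forall>i j. (i, j) \<notin> S \<longrightarrow> c i j = 0) \<and> u = comb S c)"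

lemma coeff_eqI:
  assumes "finite S" "\<And>i j. (i, j) \<notin> S \<Longrightarrow> c i j = 0" "u = comb S c"
  shows "coeff u = c"
  unfolding coeff_def
proof (rule the_equality)
  fix c' assume "\<exists>S. finite S \<and> (\<forall>i j. (i, j) \<notin> S \<longrightarrow> c' i j = 0) \<and> u = comb S c'"
  then show "c' = c" using comb_coeffs_unique[of _ S c' c] assms by metis
qed (use assms in blast)

lemma coeff_comb: "finite S \<Longrightarrow> coeff (comb S c) = (\<lambda>i j. if (i, j) \<in> S then c i j else 0)"
  by (rule coeff_eqI) (auto simp: comb_restrict)

definition support :: "'a \<Rightarrow> (nat \<times> nat) set" where
  "support u = {(i, j). coeff u i j \<noteq> 0}"

lemma finite_support: "finite (support u)"
  and comb_support: "comb (support u) (coeff u) = u"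
proof -
  obtain S c where S: "finite S" "u = comb S c" using ex_comb by blast
  then have c: "coeff u = (\<lambda>i j. if (i, j) \<in> S then c i j else 0)" by (simp add: coeff_comb)
  have sub: "support u \<subseteq> S" by (auto simp: support_def c split: if_splits)
  from sub S(1) show "finite (support u)" by (rule finite_subset)
  have "comb (support u) (coeff u) = comb S (coeff u)"
    by (rule comb_mono_neutral[symmetric]) (use S(1) sub in \<open>auto simp: support_def\<close>)
  also have "\<dots> = u" unfolding c comb_restrict by (rule S(2)[symmetric])
  finally show "comb (support u) (coeff u) = u" .
qed

lemma comb_superset_support: "finite S \<Longrightarrow> support u \<subseteq> S \<Longrightarrow> comb S (coeff u) = u"
proof -
  assume "finite S" "support u \<subseteq> S"
  then have "comb S (coeff u) = comb (support u) (coeff u)"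
    by (intro comb_mono_neutral) (auto simp: support_def)
  then show ?thesis by (simp only: comb_support)
qed

lemma coeff_inject: "coeff u = coeff v \<Longrightarrow> u = v"
  by (metis comb_support support_def)

lemma coeff_lincomb: "coeff (emb a * u + emb b * v) = (\<lambda>i j. a * coeff u i j + b * coeff v i j)"
proof -
  let ?T = "support u \<union> support v"
  have "comb ?T (coeff u) = u" "comb ?T (coeff v) = v"
    by (simp_all add: comb_superset_support finite_support)
  then have "emb a * u + emb b * v = comb ?T (\<lambda>i j. a * coeff u i j + b * coeff v i j)"
    by (simp only: comb_lincomb)
  then show ?thesis by (intro coeff_eqI) (use finite_support in \<open>auto simp: support_def\<close>)
qed

lemma coeff_add: "coeff (u + v) = (\<lambda>i j. coeff u i j + coeff v i j)"
  and coeff_scale: "coeff (emb a * u) = (\<lambda>i j. a * coeff u i j)"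
  and coeff_diff: "coeff (u - v) = (\<lambda>i j. coeff u i j - coeff v i j)"
  using coeff_lincomb[of 1 u 1 v] coeff_lincomb[of a u 0 u] coeff_lincomb[of 1 u "-1" v]
  by simp_all

lemma coeff_0: "coeff 0 = (\<lambda>i j. 0)"
  using coeff_scale[of 0 0] by simp

lemma coeff_monomial:
  "coeff (emb a * x ^ i * y ^ j) = (\<lambda>i' j'. if i' = i \<and> j' = j then a else 0)"
proof -
  have "emb a * x ^ i * y ^ j = comb {(i, j)} (\<lambda>_ _. a)" unfolding mono_comb_def by simp
  then show ?thesis by (simp add: coeff_comb)
qed

lemma eq_0_iff_coeff: "u = 0 \<longleftrightarrow> (\<forall>i j. coeff u i j = 0)"
  using coeff_inject[of u 0] by (auto simp: coeff_0)

lemma monomial_induct [case_names zero add monomial]: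
  assumes "P 0" "\<And>a b. P a \<Longrightarrow> P b \<Longrightarrow> P (a + b)"
    "\<And>i j. coeff u i j \<noteq> 0 \<Longrightarrow> P (emb (coeff u i j) * x ^ i * y ^ j)"
  shows "P u"
proof -
  have P_comb: "P (comb B (coeff u))" if "finite B" "B \<subseteq> support u" for B
    using that
  proof (induction B rule: finite_induct)
    case (insert p F)
    then show ?case using assms
      by (cases p) (auto simp: mono_comb_def support_def)
  qed (simp add: mono_comb_def assms(1))
  from P_comb[OF finite_support subset_refl] show ?thesis by (simp only: comb_support)
qed

lemma support_add: "support (u + v) \<subseteq> support u \<union> support v"
  and support_scale: "support (emb a * u) \<subseteq> support u"
  and support_0: "support 0 = {}"
  and support_monomial: "support (emb a * x ^ i * y ^ j) \<subseteq> {(i, j)}"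
  by (auto simp: support_def coeff_add coeff_scale coeff_0 coeff_monomial split: if_splits)

lemma x_mult_monomial: "x * (emb a * x ^ i * y ^ j) = emb a * x ^ Suc i * y ^ j"
  by (simp add: mult_emb_left mult.assoc)

lemma y_mult_monomial:
  "y * (emb a * x ^ i * y ^ j) = emb a * x ^ i * y ^ Suc j + emb (a * of_nat i) * x ^ (i + N - 1) * y ^ j"
proof -
  have "y * (emb a * x ^ i * y ^ j) = emb a * (y * x ^ i) * y ^ j"
    by (simp only: mult.assoc mult_emb_left)
  then show ?thesis by (simp add: y_mult_x_power algebra_simps)
qed

lemma coeff_x_mult: "coeff (x * u) = (\<lambda>i j. if i = 0 then 0 else coeff u (i - 1) j)"
proof (induction u rule: monomial_induct)
  case zero then show ?case by (simp add: coeff_0 fun_eq_iff)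
next
  case (add a b) then show ?case by (simp add: distrib_left coeff_add fun_eq_iff)
next
  case (monomial i j) show ?case unfolding x_mult_monomial coeff_monomial by (auto simp: fun_eq_iff)
qed

lemma x_mult_cancel: "x * u = 0 \<Longrightarrow> u = 0"
  unfolding eq_0_iff_coeff coeff_x_mult by (metis diff_Suc_1 nat.distinct(1))

definition homog :: "int \<Rightarrow> 'a set" where
  "homog p = {u. \<forall>(i, j)\<in>support u. int i + int (N - 1) * int j = p}"

definition ydeg_lt :: "nat \<Rightarrow> 'a set" where
  "ydeg_lt n = {u. \<forall>(i, j)\<in>support u. j < n}"

lemma homog_coeff: "u \<in> homog p \<Longrightarrow> coeff u i j \<noteq> 0 \<Longrightarrow> int i + int (N - 1) * int j = p"
  and ydeg_lt_coeff: "u \<in> ydeg_lt n \<Longrightarrow> coeff u i j \<noteq> 0 \<Longrightarrow> j < n"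
  by (auto simp: homog_def ydeg_lt_def support_def)

lemma homog_0: "0 \<in> homog p"
  and homog_add: "u \<in> homog p \<Longrightarrow> v \<in> homog p \<Longrightarrow> u + v \<in> homog p"
  and homog_scale: "u \<in> homog p \<Longrightarrow> emb a * u \<in> homog p"
  and homog_monomial: "int i + int (N - 1) * int j = p \<Longrightarrow> emb a * x ^ i * y ^ j \<in> homog p"
  unfolding homog_def using support_0 support_add support_scale support_monomial by blast+

lemma homog_diff: "u \<in> homog p \<Longrightarrow> v \<in> homog p \<Longrightarrow> u - v \<in> homog p"
  using homog_add[of u p "emb (-1) * v"] homog_scale[of v p "-1"] by simp

lemma homog_xy_power: "int i + int (N - 1) * int j = p \<Longrightarrow> x ^ i * y ^ j \<in> homog p"
  using homog_monomial[of i j p 1] by simp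

lemma ydeg_lt_0: "0 \<in> ydeg_lt n"
  and ydeg_lt_add: "u \<in> ydeg_lt n \<Longrightarrow> v \<in> ydeg_lt n \<Longrightarrow> u + v \<in> ydeg_lt n"
  and ydeg_lt_scale: "u \<in> ydeg_lt n \<Longrightarrow> emb a * u \<in> ydeg_lt n"
  and ydeg_lt_monomial: "j < n \<Longrightarrow> emb a * x ^ i * y ^ j \<in> ydeg_lt n"
  unfolding ydeg_lt_def using support_0 support_add support_scale support_monomial by blast+

lemma ydeg_lt_mono: "u \<in> ydeg_lt n \<Longrightarrow> n \<le> m \<Longrightarrow> u \<in> ydeg_lt m"
  unfolding ydeg_lt_def by fastforce

lemma ydeg_lt_0D: "u \<in> ydeg_lt 0 \<Longrightarrow> u = 0"
  unfolding ydeg_lt_def eq_0_iff_coeff support_def by auto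

lemma ex_ydeg_lt: "\<exists>n. u \<in> ydeg_lt n"
proof -
  have "j < Suc (Max (snd ` support u))" if "(i, j) \<in> support u" for i j
    using that finite_support by (simp add: le_imp_less_Suc rev_image_eqI)
  then show ?thesis unfolding ydeg_lt_def by blast
qed

lemma x_mult_homog:
  assumes "u \<in> homog p"
  shows "x * u \<in> homog (p + 1)"
proof -
  have "int i + int (N - 1) * int j = p + 1" if "coeff (x * u) i j \<noteq> 0" for i j
  proof -
    from that have "i \<noteq> 0" "coeff u (i - 1) j \<noteq> 0" by (simp_all add: coeff_x_mult split: if_splits)
    then have "int (i - 1) + int (N - 1) * int j = p" by (intro homog_coeff[OF assms])
    with \<open>i \<noteq> 0\<close> show ?thesis by simp
  qed
  then show ?thesis by (auto simp: homog_def support_def)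
qed

lemma x_mult_ydeg_lt: "u \<in> ydeg_lt n \<Longrightarrow> x * u \<in> ydeg_lt n"
  by (auto simp: ydeg_lt_def support_def coeff_x_mult split: if_splits)

lemma y_mult_homog:
  assumes "u \<in> homog p"
  shows "y * u \<in> homog (p + int (N - 1))"
proof (induction u rule: monomial_induct)
  case (monomial i j)
  then have "int i + int (N - 1) * int j = p" by (rule homog_coeff[OF assms])
  then show ?case unfolding y_mult_monomial
    by (intro homog_add homog_monomial) (use N_pos in \<open>auto simp: algebra_simps of_nat_diff\<close>)
qed (simp_all add: homog_0 distrib_left homog_add)

lemma y_mult_ydeg_lt:
  assumes "u \<in> ydeg_lt n"
  shows "y * u \<in> ydeg_lt (Suc n)"
proof (induction u rule: monomial_induct)
  case (monomial i j)
  then have "j < n" by (rule ydeg_lt_coeff[OF assms])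
  then show ?case unfolding y_mult_monomial by (intro ydeg_lt_add ydeg_lt_monomial) auto
qed (simp_all add: ydeg_lt_0 distrib_left ydeg_lt_add)

lemma x_power_mult_homog: "u \<in> homog p \<Longrightarrow> x ^ i * u \<in> homog (p + int i)"
proof (induction i arbitrary: p u)
  case (Suc i)
  from Suc.IH[OF x_mult_homog[OF Suc.prems]] have "x ^ i * (x * u) \<in> homog (p + int (Suc i))"
    by (simp add: algebra_simps)
  then show ?case by (simp only: power_Suc2 mult.assoc)
qed simp

lemma y_power_mult_homog: "u \<in> homog p \<Longrightarrow> y ^ j * u \<in> homog (p + int (N - 1) * int j)"
proof (induction j arbitrary: p u)
  case (Suc j)
  from Suc.IH[OF y_mult_homog[OF Suc.prems]]
  have "y ^ j * (y * u) \<in> homog (p + int (N - 1) * int (Suc j))" by (simp add: algebra_simps)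
  then show ?case by (simp only: power_Suc2 mult.assoc)
qed simp

lemma x_power_mult_ydeg_lt: "u \<in> ydeg_lt n \<Longrightarrow> x ^ i * u \<in> ydeg_lt n"
  by (induction i) (simp_all add: mult.assoc x_mult_ydeg_lt)

lemma homog_mult:
  assumes "u \<in> homog p" "v \<in> homog q"
  shows "u * v \<in> homog (p + q)"
proof (induction u rule: monomial_induct)
  case (monomial i j)
  then have "int i + int (N - 1) * int j = p" by (rule homog_coeff[OF assms(1)])
  moreover have "x ^ i * (y ^ j * v) \<in> homog (q + int (N - 1) * int j + int i)"
    by (intro x_power_mult_homog y_power_mult_homog assms(2))
  ultimately show ?case by (simp add: homog_scale mult.assoc algebra_simps)
qed (simp_all add: homog_0 distrib_right homog_add)

lemma homog_power: "u \<in> homog p \<Longrightarrow> u ^ i \<in> homog (int i * p)"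
proof (induction i)
  case 0
  show ?case using homog_xy_power[of 0 0 0] by simp
next
  case (Suc i)
  then have "u * u ^ i \<in> homog (p + int i * p)" by (intro homog_mult)
  then show ?case by (simp add: algebra_simps)
qed

lemma x_power_N_eq: "x ^ N = x * x ^ (N - 1)"
  using N_pos by (simp flip: power_Suc)

lemma y_power_mult_x:
  "\<exists>r. y ^ j * x = x * (y ^ j + r) \<and> r \<in> ydeg_lt j \<and> r \<in> homog (int (N - 1) * int j)"
proof (induction j)
  case 0 then show ?case by (intro exI[of _ 0]) (simp add: ydeg_lt_0 homog_0)
next
  case (Suc j)
  then obtain r where r: "y ^ j * x = x * (y ^ j + r)" "r \<in> ydeg_lt j"
    "r \<in> homog (int (N - 1) * int j)" by blast
  let ?r = "y * r + x ^ (N - 1) * y ^ j + x ^ (N - 1) * r"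
  have "y ^ Suc j * x = (y * x) * (y ^ j + r)" by (simp only: power_Suc r(1) mult.assoc)
  also have "\<dots> = x * (y ^ Suc j + ?r)" by (simp add: y_mult_x x_power_N_eq algebra_simps)
  finally have "y ^ Suc j * x = x * (y ^ Suc j + ?r)" .
  moreover have "?r \<in> ydeg_lt (Suc j)"
    using y_mult_ydeg_lt[OF r(2)] ydeg_lt_monomial[of j "Suc j" 1 "N - 1"]
      ydeg_lt_mono[OF x_power_mult_ydeg_lt[OF r(2)]]
    by (intro ydeg_lt_add) simp_all
  moreover have "?r \<in> homog (int (N - 1) * int (Suc j))"
    using y_mult_homog[OF r(3)] x_power_mult_homog[OF r(3), of "N - 1"]
      homog_xy_power[of "N - 1" j "int (N - 1) * int (Suc j)"]
    by (intro homog_add) (simp_all add: algebra_simps)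
  ultimately show ?case by blast
qed

lemma xy_power_mult_x:
  "\<exists>r. x ^ i * y ^ j * x = x * (x ^ i * y ^ j + r) \<and> r \<in> ydeg_lt j
     \<and> r \<in> homog (int i + int (N - 1) * int j)"
proof -
  obtain r where r: "y ^ j * x = x * (y ^ j + r)" "r \<in> ydeg_lt j" "r \<in> homog (int (N - 1) * int j)"
    using y_power_mult_x by blast
  have "x ^ i * y ^ j * x = x * (x ^ i * y ^ j + x ^ i * r)"
    by (simp only: mult.assoc r(1)) (simp only: mult.assoc[symmetric] power_commutes distrib_left)
  moreover have "x ^ i * r \<in> ydeg_lt j" by (rule x_power_mult_ydeg_lt[OF r(2)])
  moreover have "x ^ i * r \<in> homog (int i + int (N - 1) * int j)"
    using x_power_mult_homog[OF r(3), of i] by (simp add: add.commute)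
  ultimately show ?thesis by blast
qed

lemma mult_x_eq_x_mult_lower:
  assumes "u \<in> ydeg_lt (Suc n)"
  shows "\<exists>R\<in>ydeg_lt n. u * x = x * (u + R)"
proof (induction u rule: monomial_induct)
  case zero show ?case by (intro bexI[of _ 0]) (simp_all add: ydeg_lt_0)
next
  case (add a b)
  then obtain Ra Rb where "Ra \<in> ydeg_lt n" "a * x = x * (a + Ra)" "Rb \<in> ydeg_lt n" "b * x = x * (b + Rb)"
    by blast
  then show ?case by (intro bexI[of _ "Ra + Rb"]) (simp_all add: ydeg_lt_add algebra_simps)
next
  case (monomial i j)
  let ?c = "emb (coeff u i j)"
  have "j < Suc n" using ydeg_lt_coeff[OF assms monomial] .
  obtain r where r: "x ^ i * y ^ j * x = x * (x ^ i * y ^ j + r)" "r \<in> ydeg_lt j"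
    using xy_power_mult_x by blast
  from r(1) have "?c * x ^ i * y ^ j * x = x * (?c * x ^ i * y ^ j + ?c * r)"
    by (simp only: mult.assoc distrib_left mult_emb_left[of x])
  moreover have "?c * r \<in> ydeg_lt n"
    using ydeg_lt_mono[OF r(2)] \<open>j < Suc n\<close> by (intro ydeg_lt_scale) simp
  ultimately show ?case by blast
qed

lemma mult_x_in_x_ideal: "\<exists>w. u * x = x * w"
  using ex_ydeg_lt[of u] mult_x_eq_x_mult_lower ydeg_lt_mono[of u _ "Suc _"] by (meson le_SucI order_refl)

text \<open>\<open>qcomm \<omega> m\<close> is the value at \<open>x\<close> of the inner twisted derivation \<open>u \<mapsto> m u - \<phi>(u) m\<close>.\<close>

definition qcomm :: "'k \<Rightarrow> 'a \<Rightarrow> 'a" where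
  "qcomm w m = m * x - emb w * x * m"

lemma qcomm_0: "qcomm w 0 = 0"
  and qcomm_add: "qcomm w (a + b) = qcomm w a + qcomm w b"
  and qcomm_diff: "qcomm w (a - b) = qcomm w a - qcomm w b"
  unfolding qcomm_def by (simp_all add: algebra_simps)

lemma qcomm_scale: "qcomm w (emb c * m) = emb c * qcomm w m"
  unfolding qcomm_def
  by (simp only: right_diff_distrib mult.assoc mult_emb_left[of x c] mult_emb_left[of "emb w" c])

lemma qcomm_in_x_ideal: "\<exists>v. qcomm w m = x * v"
proof -
  obtain v where "m * x = x * v" using mult_x_in_x_ideal by blast
  then have "qcomm w m = x * (v - emb w * m)"
    unfolding qcomm_def by (simp add: right_diff_distrib mult_emb_left mult.assoc)
  then show ?thesis by blast
qed

lemma qcomm_eq_x_mult: "m * x = x * (m + R) \<Longrightarrow> qcomm w m = x * (emb (1 - w) * m + R)"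
  unfolding qcomm_def by (simp add: emb_diff algebra_simps mult_emb_left mult.assoc)

lemma qcomm_eq_0D:
  assumes "w \<noteq> 1" "qcomm w m = 0"
  shows "m = 0"
proof -
  obtain n where "m \<in> ydeg_lt n" using ex_ydeg_lt by blast
  then show ?thesis using assms(2)
  proof (induction n arbitrary: m)
    case 0 then show ?case by (blast intro: ydeg_lt_0D)
  next
    case (Suc n)
    obtain R where R: "R \<in> ydeg_lt n" "m * x = x * (m + R)"
      using mult_x_eq_x_mult_lower[OF Suc.prems(1)] by blast
    have "emb (1 - w) * m + R = 0"
      using Suc.prems(2) qcomm_eq_x_mult[OF R(2)] x_mult_cancel by simp
    then have "emb (1 - w) * m = emb (- 1) * R" by (simp add: eq_neg_iff_add_eq_0)
    then have "m = emb (inverse (1 - w)) * (emb (- 1) * R)"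
      using emb_inverse_cancel[of "1 - w" m] assms(1) by simp
    with R(1) have "m \<in> ydeg_lt n" by (simp only: ydeg_lt_scale)
    then show ?case using Suc.IH Suc.prems(2) by blast
  qed
qed

lemma x_mult_eq_qcommI:
  assumes "w \<noteq> 1" "u * x = x * (u + R)" "x * R = qcomm w m"
  shows "x * u = qcomm w (emb (inverse (1 - w)) * (u - m))"
proof -
  have "qcomm w u = emb (1 - w) * (x * u) + qcomm w m"
    using qcomm_eq_x_mult[OF assms(2)] assms(3) by (simp only: distrib_left mult_emb_left)
  then have "emb (1 - w) * (x * u) = qcomm w (u - m)"
    by (simp only: qcomm_diff) (metis add_diff_cancel_right')
  then have "emb (inverse (1 - w)) * (emb (1 - w) * (x * u)) = qcomm w (emb (inverse (1 - w)) * (u - m))"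
    by (simp add: qcomm_scale)
  then show ?thesis using assms(1) by (simp add: emb_inverse_cancel)
qed

lemma x_mult_in_qcomm_image_homog:
  assumes "w \<noteq> 1" "v \<in> homog p"
  shows "\<exists>m\<in>homog p. x * v = qcomm w m"
proof -
  obtain n where "v \<in> ydeg_lt n" using ex_ydeg_lt by blast
  then show ?thesis using assms(2)
  proof (induction n arbitrary: v)
    case 0
    then show ?case using ydeg_lt_0D homog_0 qcomm_0 by (metis mult_zero_right)
  next
    case (Suc n)
    note v = Suc.prems
    show ?case
    proof (induction v rule: monomial_induct)
      case zero show ?case using homog_0 qcomm_0 by (metis mult_zero_right)
    next
      case (add a b)
      then obtain ma mb where "ma \<in> homog p" "x * a = qcomm w ma" "mb \<in> homog p" "x * b = qcomm w mb"
        by blast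
      then show ?case by (intro bexI[of _ "ma + mb"]) (simp_all add: homog_add qcomm_add distrib_left)
    next
      case (monomial i j)
      let ?c = "emb (coeff v i j)" and ?u = "x ^ i * y ^ j"
      have "j < Suc n" and deg: "int i + int (N - 1) * int j = p"
        using ydeg_lt_coeff[OF v(1) monomial] homog_coeff[OF v(2) monomial] by auto
      obtain r where r: "?u * x = x * (?u + r)" "r \<in> ydeg_lt j" "r \<in> homog p"
        using xy_power_mult_x deg by blast
      have "r \<in> ydeg_lt n" using ydeg_lt_mono[OF r(2)] \<open>j < Suc n\<close> by simp
      then obtain m where m: "m \<in> homog p" "x * r = qcomm w m" using Suc.IH r(3) by blast
      from x_mult_eq_qcommI[OF assms(1) r(1) m(2)]
      have "x * (?c * x ^ i * y ^ j) = qcomm w (?c * (emb (inverse (1 - w)) * (?u - m)))"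
        by (simp only: qcomm_scale mult.assoc mult_emb_left[of x])
      moreover have "?c * (emb (inverse (1 - w)) * (?u - m)) \<in> homog p"
        by (intro homog_scale homog_diff m(1) homog_xy_power deg)
      ultimately show ?case by blast
    qed
  qed
qed

lemma x_mult_in_qcomm_image:
  assumes "w \<noteq> 1"
  shows "\<exists>m. x * v = qcomm w m"
proof (induction v rule: monomial_induct)
  case zero show ?case using qcomm_0 by (metis mult_zero_right)
next
  case (add a b)
  then obtain ma mb where "x * a = qcomm w ma" "x * b = qcomm w mb" by blast
  then show ?case by (intro exI[of _ "ma + mb"]) (simp add: qcomm_add distrib_left)
next
  case (monomial i j)
  show ?case using x_mult_in_qcomm_image_homog[OF assms homog_monomial] by blast
qed

definition y_part :: "'a \<Rightarrow> 'a" where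
  "y_part a = comb (support a \<inter> {(i, j). i = 0}) (coeff a)"

lemma coeff_y_part: "coeff (y_part a) = (\<lambda>i j. if i = 0 then coeff a i j else 0)"
  unfolding y_part_def
  by (subst coeff_comb, simp add: finite_support) (auto simp: support_def fun_eq_iff)

lemma coeff_mult_y: "coeff (u * y) = (\<lambda>i j. if j = 0 then 0 else coeff u i (j - 1))"
proof (induction u rule: monomial_induct)
  case zero then show ?case by (simp add: coeff_0 fun_eq_iff)
next
  case (add a b) then show ?case by (simp add: distrib_right coeff_add fun_eq_iff)
next
  case (monomial i j)
  have eq: "emb (coeff u i j) * x ^ i * y ^ j * y = emb (coeff u i j) * x ^ i * y ^ Suc j"
    by (simp only: mult.assoc power_Suc2)
  show ?case unfolding eq coeff_monomial by (auto simp: fun_eq_iff)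
qed

lemma eq_x_mult_if_coeff_0:
  assumes "\<And>j. coeff u 0 j = 0"
  shows "\<exists>v. u = x * v"
proof (induction u rule: monomial_induct)
  case zero show ?case by (intro exI[of _ 0]) simp
next
  case (add a b)
  then obtain va vb where "a = x * va" "b = x * vb" by blast
  then show ?case by (intro exI[of _ "va + vb"]) (simp add: distrib_left)
next
  case (monomial i j)
  then obtain i' where "i = Suc i'" using assms by (cases i) auto
  then show ?case by (metis x_mult_monomial)
qed

lemma x_mult_plus_y_part: "\<exists>v. a = x * v + y_part a"
proof -
  have "\<And>j. coeff (a - y_part a) 0 j = 0" by (simp add: coeff_diff coeff_y_part)
  then obtain v where "a - y_part a = x * v" using eq_x_mult_if_coeff_0 by blast
  then show ?thesis by (metis diff_add_cancel)
qed

lemma y_part_eq_0_if_in_x_ideal: "y_part a = x * v \<Longrightarrow> y_part a = 0"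
  unfolding eq_0_iff_coeff by (metis coeff_x_mult coeff_y_part)

lemma y_part_eq_0_if_mult_y_in_x_ideal:
  assumes "c \<noteq> 0" "emb c * (y_part a * y) = x * v"
  shows "y_part a = 0"
proof -
  have "coeff (emb c * (y_part a * y)) 0 (Suc j) = coeff (x * v) 0 (Suc j)" for j
    using assms(2) by simp
  then have "coeff (y_part a) 0 j = 0" for j
    using assms(1) by (simp add: coeff_scale coeff_mult_y coeff_x_mult)
  then show ?thesis unfolding eq_0_iff_coeff coeff_y_part by simp
qed

lemma y_part_commute_y: "y * y_part a = y_part a * y"
  unfolding y_part_def mono_comb_def sum_distrib_left sum_distrib_right
  by (rule sum.cong) (auto simp: mult_emb_left mult.assoc power_commutes)

lemma y_part_homog:
  assumes "N \<ge> 2" "a \<in> homog (int (N - 1) * int k)"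
  shows "y_part a = emb (coeff a 0 k) * y ^ k"
proof -
  have "j = k" if "coeff a 0 j \<noteq> 0" for j
    using homog_coeff[OF assms(2) that] assms(1) by simp
  then have "support a \<inter> {(i, j). i = 0} \<subseteq> {(0, k)}" by (auto simp: support_def)
  then have "y_part a = comb {(0, k)} (coeff a)"
    unfolding y_part_def by (intro comb_mono_neutral[symmetric]) (auto simp: support_def)
  then show ?thesis by (simp add: mono_comb_def)
qed

lemma y_part_diff: "y_part (u - v) = y_part u - y_part v"
  by (rule coeff_inject) (simp add: coeff_y_part coeff_diff fun_eq_iff)

lemma y_part_scale_y_power: "y_part (emb c * y ^ k) = emb c * y ^ k"
  using coeff_monomial[of c 0 k] by (intro coeff_inject) (simp add: coeff_y_part fun_eq_iff)

definition lift :: "('k \<Rightarrow> 'b::ring_1) \<Rightarrow> 'b \<Rightarrow> 'b \<Rightarrow> 'a \<Rightarrow> 'b" where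
  "lift E X Y u = (\<Sum>(i, j)\<in>support u. E (coeff u i j) * X ^ i * Y ^ j)"

context
  fixes E :: "'k \<Rightarrow> 'b::ring_1" and X Y :: 'b
  assumes E: "k_algebra E" and XY_rel: "Y * X - X * Y = X ^ N"
begin

interpretation E: k_algebra E by (rule E)

lemma lift_superset:
  "finite S \<Longrightarrow> support u \<subseteq> S \<Longrightarrow> lift E X Y u = (\<Sum>(i, j)\<in>S. E (coeff u i j) * X ^ i * Y ^ j)"
  unfolding lift_def by (rule sum.mono_neutral_left) (auto simp: support_def)

lemma lift_add: "lift E X Y (u + v) = lift E X Y u + lift E X Y v"
proof -
  let ?S = "support u \<union> support v"
  have S: "finite ?S" using finite_support by simp
  have "lift E X Y (u + v) = (\<Sum>(i, j)\<in>?S. E (coeff (u + v) i j) * X ^ i * Y ^ j)"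
    using lift_superset[OF S] support_add by blast
  also have "\<dots> = (\<Sum>(i, j)\<in>?S. E (coeff u i j) * X ^ i * Y ^ j)
      + (\<Sum>(i, j)\<in>?S. E (coeff v i j) * X ^ i * Y ^ j)"
    by (simp add: coeff_add case_prod_beta' algebra_simps flip: sum.distrib)
  also have "\<dots> = lift E X Y u + lift E X Y v"
    using lift_superset[OF S] by simp
  finally show ?thesis .
qed

lemma lift_scale: "lift E X Y (emb a * u) = E a * lift E X Y u"
proof -
  have "lift E X Y (emb a * u) = (\<Sum>(i, j)\<in>support u. E (coeff (emb a * u) i j) * X ^ i * Y ^ j)"
    using lift_superset[OF finite_support] support_scale by blast
  then show ?thesis
    unfolding lift_def by (simp add: coeff_scale sum_distrib_left case_prod_beta' mult.assoc)
qed

lemma lift_0: "lift E X Y 0 = 0"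
  using lift_scale[of 0 0] by simp

lemma lift_monomial: "lift E X Y (emb a * x ^ i * y ^ j) = E a * X ^ i * Y ^ j"
proof -
  have "lift E X Y (emb a * x ^ i * y ^ j)
      = (\<Sum>(i', j')\<in>{(i, j)}. E (coeff (emb a * x ^ i * y ^ j) i' j') * X ^ i' * Y ^ j')"
    by (rule lift_superset) (simp_all add: support_monomial)
  then show ?thesis by (simp add: coeff_monomial)
qed

lemma lift_x_mult: "lift E X Y (x * u) = X * lift E X Y u"
proof (induction u rule: monomial_induct)
  case (monomial i j)
  show ?case unfolding x_mult_monomial lift_monomial
    by (simp only: E.mult_emb_left mult.assoc power_Suc)
qed (simp_all add: lift_0 distrib_left lift_add)

lemma lift_y_mult: "lift E X Y (y * u) = Y * lift E X Y u"
proof (induction u rule: monomial_induct)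
  case (monomial i j)
  let ?c = "coeff u i j"
  have "lift E X Y (y * (emb ?c * x ^ i * y ^ j))
      = E ?c * ((X ^ i * Y + of_nat i * X ^ (i + N - 1)) * Y ^ j)"
    unfolding y_mult_monomial lift_add lift_monomial
    by (simp only: E.emb_mult E.emb_of_nat power_Suc distrib_right distrib_left mult.assoc)
  also have "\<dots> = Y * (E ?c * X ^ i * Y ^ j)"
    by (simp only: comm_rel_power[OF XY_rel N_pos, symmetric] E.mult_emb_left mult.assoc)
  finally show ?case unfolding lift_monomial .
qed (simp_all add: lift_0 distrib_left lift_add)

lemma lift_mult: "lift E X Y (u * v) = lift E X Y u * lift E X Y v"
proof (induction u rule: monomial_induct)
  case (monomial i j)
  have x_power: "lift E X Y (x ^ i * w) = X ^ i * lift E X Y w" for w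
    by (induction i arbitrary: w) (simp_all add: mult.assoc lift_x_mult)
  have y_power: "lift E X Y (y ^ j * w) = Y ^ j * lift E X Y w" for w
    by (induction j arbitrary: w) (simp_all add: mult.assoc lift_y_mult)
  have "lift E X Y (emb (coeff u i j) * x ^ i * y ^ j * v)
      = E (coeff u i j) * (X ^ i * (Y ^ j * lift E X Y v))"
    by (simp only: mult.assoc lift_scale x_power y_power)
  then show ?case unfolding lift_monomial by (simp only: mult.assoc)
qed (simp_all add: lift_0 distrib_right lift_add)

lemma lift_x: "lift E X Y x = X"
  and lift_y: "lift E X Y y = Y"
  using lift_monomial[of 1 1 0] lift_monomial[of 1 0 1] by simp_all

end

end

locale A_N_twist = A_N emb N x y for emb :: "'k::field \<Rightarrow> 'a::ring_1" and N x y +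
  fixes \<omega> :: 'k and \<phi> :: "'a \<Rightarrow> 'a"
  assumes omega_ne_1: "\<omega> \<noteq> 1"
    and phi_linear: "k_linear emb \<phi>" and phi_1: "\<phi> 1 = 1" and phi_mult: "\<phi> (u * v) = \<phi> u * \<phi> v"
    and phi_x: "\<phi> x = emb \<omega> * x" and phi_y: "\<phi> y = emb (\<omega> ^ (N - 1)) * y"
begin

lemma phi_add: "\<phi> (u + v) = \<phi> u + \<phi> v"
  and phi_scale: "\<phi> (emb c * u) = emb c * \<phi> u"
  using phi_linear unfolding k_linear_def by blast+

lemma phi_emb: "\<phi> (emb c) = emb c"
  using phi_scale[of c 1] phi_1 by simp

lemma phi_0: "\<phi> 0 = 0"
  using phi_scale[of 0 0] by simp

lemma phi_diff: "\<phi> (u - v) = \<phi> u - \<phi> v"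
  using phi_add[of "u - v" v] by (simp add: eq_diff_eq)

lemma phi_power: "\<phi> (u ^ n) = \<phi> u ^ n"
  by (induction n) (simp_all add: phi_1 phi_mult)

definition inner_der :: "'a \<Rightarrow> 'a \<Rightarrow> 'a" where
  "inner_der m = (\<lambda>u. m * u - \<phi> u * m)"

lemma twisted_der_inner_der: "twisted_der emb \<phi> (inner_der m)"
  unfolding twisted_der_def k_linear_def inner_der_def
  by (simp add: phi_add phi_mult phi_scale phi_emb algebra_simps mult_emb_left)

lemma inner_der_x: "inner_der m x = qcomm \<omega> m"
  unfolding inner_der_def qcomm_def phi_x ..

lemma twisted_der_relation:
  assumes "twisted_der emb \<phi> d"
  shows "qcomm \<omega> (d y) = d x * y - \<phi> y * d x + d (x ^ N)"
proof -
  have "d (y * x) = d (x * y) + d (x ^ N)" by (simp only: y_mult_x twisted_der_add[OF assms])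
  then have "d y * x + \<phi> y * d x = d x * y + emb \<omega> * x * d y + d (x ^ N)"
    by (simp only: twisted_der_mult[OF assms] phi_x)
  then show ?thesis unfolding qcomm_def by (simp add: algebra_simps)
qed

lemma twisted_der_x_power_N_in_x_ideal:
  assumes "twisted_der emb \<phi> d" "N \<ge> 2"
  shows "\<exists>v. d (x ^ N) = x * v"
proof -
  obtain n where n: "N = Suc (Suc n)" using assms(2) by (metis add_2_eq_Suc le_Suc_ex)
  obtain v where "d x * x ^ n * x = x * v" using mult_x_in_x_ideal by blast
  then have v: "d x * x ^ Suc n = x * v" by (metis mult.assoc power_Suc2)
  have "d (x ^ N) = d x * x ^ Suc n + emb \<omega> * x * d (x ^ Suc n)"
    by (simp only: n power_Suc[of x "Suc n"] twisted_der_mult[OF assms(1)] phi_x)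
  also have "\<dots> = x * (v + emb \<omega> * d (x ^ Suc n))"
    by (simp only: v distrib_left emb_central[of \<omega> x] mult.assoc)
  finally show ?thesis by blast
qed

lemma twisted_der_eq_0_if_x_y:
  assumes "twisted_der emb \<phi> d" "d x = 0" "d y = 0"
  shows "d u = 0"
proof -
  have "d (x ^ i) = 0" for i
    by (induction i) (simp_all add: twisted_der_mult[OF assms(1)] twisted_der_one[OF assms(1) phi_1] assms(2))
  moreover have "d (y ^ j) = 0" for j
    by (induction j) (simp_all add: twisted_der_mult[OF assms(1)] twisted_der_one[OF assms(1) phi_1] assms(3))
  ultimately show ?thesis
  proof (induction u rule: monomial_induct)
    case zero show ?case by (rule twisted_der_0[OF assms(1)])
  next
    case (add a b) then show ?case by (simp add: twisted_der_add[OF assms(1)])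
  next
    case (monomial i j)
    then show ?case
      by (simp only: mult.assoc twisted_der_scale[OF assms(1)]) (simp add: twisted_der_mult[OF assms(1)])
  qed
qed

text \<open>A twisted derivation is determined by its value at \<open>x\<close>: the defining relation
  determines \<open>qcomm \<omega> (d y)\<close>, and \<open>qcomm \<omega>\<close> is injective.\<close>

lemma twisted_der_eq_0_if_x:
  assumes "twisted_der emb \<phi> d" "d x = 0"
  shows "d u = 0"
proof -
  have "d (x ^ n) = 0" for n
    by (induction n) (simp_all add: twisted_der_mult[OF assms(1)] twisted_der_one[OF assms(1) phi_1] assms(2))
  then have "qcomm \<omega> (d y) = 0" using twisted_der_relation[OF assms(1)] assms(2) by simp
  then have "d y = 0" using qcomm_eq_0D omega_ne_1 by blast
  then show ?thesis using twisted_der_eq_0_if_x_y assms by blast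
qed

lemma inner_if_x_eq_qcomm:
  assumes "twisted_der emb \<phi> d" "d x = qcomm \<omega> m"
  shows "inner_twisted \<phi> d"
proof -
  have "twisted_der emb \<phi> (\<lambda>u. d u - inner_der m u)"
    by (rule twisted_der_diff[OF assms(1) twisted_der_inner_der])
  moreover have "d x - inner_der m x = 0" by (simp add: assms(2) inner_der_x)
  ultimately have "d u - inner_der m u = 0" for u by (rule twisted_der_eq_0_if_x)
  then show ?thesis unfolding inner_twisted_def inner_der_def by (metis right_minus_eq)
qed

lemma inner_twisted_iff_y_part_0:
  assumes "twisted_der emb \<phi> d"
  shows "inner_twisted \<phi> d \<longleftrightarrow> y_part (d x) = 0"
proof
  assume "inner_twisted \<phi> d"
  then obtain m where "\<forall>u. d u = m * u - \<phi> u * m" unfolding inner_twisted_def by blast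
  then have "d x = qcomm \<omega> m" unfolding qcomm_def by (simp add: phi_x)
  moreover obtain v where "qcomm \<omega> m = x * v" using qcomm_in_x_ideal by blast
  ultimately show "y_part (d x) = 0"
    by (metis coeff_x_mult coeff_y_part eq_0_iff_coeff)
next
  assume "y_part (d x) = 0"
  obtain v where "d x = x * v + y_part (d x)" using x_mult_plus_y_part by blast
  moreover obtain m where "x * v = qcomm \<omega> m" using x_mult_in_qcomm_image omega_ne_1 by blast
  ultimately show "inner_twisted \<phi> d"
    using \<open>y_part (d x) = 0\<close> inner_if_x_eq_qcomm[OF assms] by simp
qed

lemma ex_twisted_der_x_eq_y_part:
  assumes "twisted_der emb \<phi> d"
  shows "\<exists>h. twisted_der emb \<phi> h \<and> h x = y_part (d x)"
proof -
  obtain v where v: "d x = x * v + y_part (d x)" using x_mult_plus_y_part by blast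
  obtain m where m: "x * v = qcomm \<omega> m" using x_mult_in_qcomm_image omega_ne_1 by blast
  let ?h = "\<lambda>u. d u - inner_der m u"
  have "twisted_der emb \<phi> ?h" by (rule twisted_der_diff[OF assms twisted_der_inner_der])
  moreover have "?h x = y_part (d x)" using v m inner_der_x by (metis add_diff_cancel_left')
  ultimately show ?thesis by blast
qed

lemma qcomm_y_if_x_in_y_part:
  assumes "twisted_der emb \<phi> d" "d x = y_part a"
  shows "qcomm \<omega> (d y) = emb (1 - \<omega> ^ (N - 1)) * (y_part a * y) + d (x ^ N)"
proof -
  have "\<phi> y * y_part a = emb (\<omega> ^ (N - 1)) * (y_part a * y)"
    by (simp only: phi_y mult.assoc y_part_commute_y)
  then show ?thesis
    using twisted_der_relation[OF assms(1)] by (simp add: assms(2) emb_diff left_diff_distrib)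
qed

lemma twisted_der_inner_if_N_1:
  assumes "N = 1" "twisted_der emb \<phi> d"
  shows "inner_twisted \<phi> d"
proof -
  obtain h where h: "twisted_der emb \<phi> h" "h x = y_part (d x)"
    using ex_twisted_der_x_eq_y_part[OF assms(2)] by blast
  have "qcomm \<omega> (h y) = y_part (d x)" using qcomm_y_if_x_in_y_part[OF h(1,2)] h(2) assms(1) by simp
  then have "y_part (d x) = 0" by (metis qcomm_in_x_ideal y_part_eq_0_if_in_x_ideal)
  then show ?thesis using inner_twisted_iff_y_part_0[OF assms(2)] by simp
qed

lemma twisted_der_inner_if_not_root:
  assumes "N \<ge> 2" "\<omega> ^ (N - 1) \<noteq> 1" "twisted_der emb \<phi> d"
  shows "inner_twisted \<phi> d"
proof -
  obtain h where h: "twisted_der emb \<phi> h" "h x = y_part (d x)"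
    using ex_twisted_der_x_eq_y_part[OF assms(3)] by blast
  obtain v1 where v1: "qcomm \<omega> (h y) = x * v1" using qcomm_in_x_ideal by blast
  obtain v2 where v2: "h (x ^ N) = x * v2" using twisted_der_x_power_N_in_x_ideal[OF h(1) assms(1)] by blast
  have "emb (1 - \<omega> ^ (N - 1)) * (y_part (d x) * y) = x * (v1 - v2)"
    using qcomm_y_if_x_in_y_part[OF h] v1 v2 by (simp add: right_diff_distrib)
  then have "y_part (d x) = 0"
    by (rule y_part_eq_0_if_mult_y_in_x_ideal[rotated]) (use assms(2) in simp)
  then show ?thesis using inner_twisted_iff_y_part_0[OF assms(3)] by simp
qed

lemma graded_piece_eq_homog: "graded_piece emb N x y p = homog p"
proof (intro equalityI subsetI)
  fix u assume "u \<in> graded_piece emb N x y p"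
  then obtain S c where S: "finite S" "\<forall>(i, j)\<in>S. int i + int (N - 1) * int j = p" "u = comb S c"
    unfolding graded_piece_def by blast
  have "coeff u = (\<lambda>i j. if (i, j) \<in> S then c i j else 0)" unfolding S(3) by (rule coeff_comb[OF S(1)])
  then have "support u \<subseteq> S" by (auto simp: support_def split: if_splits)
  with S(2) show "u \<in> homog p" unfolding homog_def by blast
next
  fix u assume "u \<in> homog p"
  then have "finite (support u) \<and> (\<forall>(i, j)\<in>support u. int i + int (N - 1) * int j = p)
      \<and> u = comb (support u) (coeff u)"
    unfolding homog_def by (simp add: finite_support comb_support)
  then show "u \<in> graded_piece emb N x y p" unfolding graded_piece_def by blast
qed

lemma hom_der_iff:
  "d \<in> hom_der emb N x y \<phi> l \<longleftrightarrow> twisted_der emb \<phi> d \<and> (\<forall>p. \<forall>u\<in>homog p. d u \<in> homog (p + l))"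
  unfolding hom_der_def graded_piece_eq_homog by simp

lemma twisted_der_power_homog:
  assumes d: "twisted_der emb \<phi> d" and "\<phi> v = emb c * v"
    and "v \<in> homog q" "d v \<in> homog (q + l)"
  shows "d (v ^ i) \<in> homog (int i * q + l)"
proof (induction i)
  case (Suc i)
  have "d (v ^ Suc i) = d v * v ^ i + emb c * (v * d (v ^ i))"
    by (simp only: power_Suc twisted_der_mult[OF d] assms(2) mult.assoc)
  moreover have "d v * v ^ i \<in> homog (q + l + int i * q)"
    using homog_mult[OF assms(4) homog_power[OF assms(3)]] .
  moreover have "emb c * (v * d (v ^ i)) \<in> homog (q + (int i * q + l))"
    using homog_scale[OF homog_mult[OF assms(3) Suc.IH]] .
  ultimately show ?case by (simp add: homog_add algebra_simps)
qed (simp add: twisted_der_one[OF d phi_1] homog_0)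

lemma twisted_der_homogI:
  assumes d: "twisted_der emb \<phi> d"
    and dx: "d x \<in> homog (1 + l)" and dy: "d y \<in> homog (int (N - 1) + l)"
    and u: "u \<in> homog p"
  shows "d u \<in> homog (p + l)"
proof -
  have x: "x \<in> homog 1" and y: "y \<in> homog (int (N - 1))"
    using homog_xy_power[of 1 0 1] homog_xy_power[of 0 1 "int (N - 1)"] by simp_all
  have dx_power: "d (x ^ i) \<in> homog (int i * 1 + l)" for i
    using twisted_der_power_homog[OF d phi_x x] dx by simp
  have dy_power: "d (y ^ j) \<in> homog (int j * int (N - 1) + l)" for j
    using twisted_der_power_homog[OF d phi_y y dy] .
  show ?thesis
  proof (induction u rule: monomial_induct)
    case zero show ?case by (simp add: twisted_der_0[OF d] homog_0)
  next
    case (add a b) then show ?case by (simp add: twisted_der_add[OF d] homog_add)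
  next
    case (monomial i j)
    have deg: "int i + int (N - 1) * int j = p" using homog_coeff[OF u monomial] .
    have "\<phi> (x ^ i) \<in> homog (int i * 1)"
      unfolding phi_power phi_x using homog_power[OF homog_scale[OF x]] .
    from homog_mult[OF this dy_power] homog_mult[OF dx_power homog_power[OF y]]
    have "\<phi> (x ^ i) * d (y ^ j) \<in> homog (p + l)" "d (x ^ i) * y ^ j \<in> homog (p + l)"
      unfolding deg[symmetric] by (simp_all add: algebra_simps)
    then show ?case
      by (simp only: mult.assoc twisted_der_scale[OF d], simp only: twisted_der_mult[OF d])
        (intro homog_scale homog_add)
  qed
qed

text \<open>A twisted derivation \<open>d\<close> is the same as the algebra map \<open>u \<mapsto> UTri (\<phi> u) (d u) u\<close>
  into upper triangular matrices, which exists by the universal property as soon as the images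
  of \<open>x\<close> and \<open>y\<close> satisfy the defining relation.\<close>

lemma UTri_yx_minus_xy:
  assumes "qcomm \<omega> b + \<phi> y * a - a * y = der_power (\<phi> x) a x N"
  shows "UTri (\<phi> y) b y * UTri (\<phi> x) a x - UTri (\<phi> x) a x * UTri (\<phi> y) b y = UTri (\<phi> x) a x ^ N"
proof -
  have "\<phi> y * \<phi> x - \<phi> x * \<phi> y = \<phi> x ^ N"
    using yx_minus_xy by (metis phi_diff phi_mult phi_power)
  moreover have "\<phi> y * a + b * x - (\<phi> x * b + a * y) = der_power (\<phi> x) a x N"
    using assms unfolding qcomm_def phi_x by (simp add: algebra_simps)
  ultimately show ?thesis unfolding UTri_power using yx_minus_xy by simp
qed

lemma ex_twisted_der:
  assumes "qcomm \<omega> b + \<phi> y * a - a * y = der_power (\<phi> x) a x N"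
  shows "\<exists>d. twisted_der emb \<phi> d \<and> d x = a \<and> d y = b"
proof -
  define E where "E c = UTri (emb c) 0 (emb c)" for c
  define X where "X = UTri (\<phi> x) a x"
  define Y where "Y = UTri (\<phi> y) b y"
  have E: "k_algebra E" unfolding E_def by (rule k_algebra_UTri)
  have XY: "Y * X - X * Y = X ^ N" unfolding X_def Y_def by (rule UTri_yx_minus_xy[OF assms])
  let ?L = "lift E X Y"
  have diag: "diag1 (?L u) = \<phi> u \<and> diag2 (?L u) = u" for u
  proof (induction u rule: monomial_induct)
    case zero show ?case by (simp add: lift_0[OF E XY] phi_0)
  next
    case (add a b) then show ?case by (simp add: lift_add[OF E XY] phi_add)
  next
    case (monomial i j)
    have "\<phi> (emb (coeff u i j) * x ^ i * y ^ j) = emb (coeff u i j) * \<phi> x ^ i * \<phi> y ^ j"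
      by (simp only: mult.assoc phi_scale) (simp only: phi_mult phi_power)
    then show ?case unfolding lift_monomial[OF E XY] by (simp add: E_def X_def Y_def UTri_power)
  qed
  define d where "d u = corner (?L u)" for u
  have "twisted_der emb \<phi> d"
    unfolding twisted_der_def k_linear_def d_def
  proof (intro conjI allI)
    fix u v
    show "corner (?L (u + v)) = corner (?L u) + corner (?L v)"
      by (simp only: lift_add[OF E XY] utri_sel_add)
    show "corner (?L (u * v)) = corner (?L u) * v + \<phi> u * corner (?L v)"
      by (simp only: lift_mult[OF E XY] utri_sel_mult diag add.commute)
  next
    fix c u
    show "corner (?L (emb c * u)) = emb c * corner (?L u)"
      by (simp only: lift_scale[OF E XY] utri_sel_mult) (simp add: E_def)
  qed
  moreover have "d x = a" "d y = b"
    unfolding d_def lift_x[OF E XY] lift_y[OF E XY] by (simp_all add: X_def Y_def)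
  ultimately show ?thesis by blast
qed

lemma der_power_y_power_homog: "der_power (\<phi> x) (y ^ k) x (Suc n) \<in> homog (int (N - 1) * int k + int n)"
proof (induction n)
  case 0 show ?case using homog_xy_power[of 0 k] by simp
next
  case (Suc n)
  have "der_power (\<phi> x) (y ^ k) x (Suc (Suc n)) = emb \<omega> * (x * der_power (\<phi> x) (y ^ k) x (Suc n)) + y ^ k * x ^ Suc n"
    by (simp only: der_power.simps(2)[of _ _ _ "Suc n"] phi_x mult.assoc)
  moreover have "emb \<omega> * (x * der_power (\<phi> x) (y ^ k) x (Suc n)) \<in> homog (int (N - 1) * int k + int n + 1)"
    using homog_scale[OF x_mult_homog[OF Suc.IH]] .
  moreover have "y ^ k * x ^ Suc n \<in> homog (int (N - 1) * int k + int (Suc n))"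
    using homog_mult[OF homog_xy_power[of 0 k] homog_xy_power[of "Suc n" 0]] by simp
  ultimately show ?case by (simp add: homog_add algebra_simps)
qed

lemma der_power_in_x_ideal:
  assumes "N \<ge> 2"
  shows "\<exists>w. der_power (\<phi> x) a x N = x * w"
proof -
  obtain n where n: "N = Suc (Suc n)" using assms by (metis add_2_eq_Suc le_Suc_ex)
  obtain v where v: "a * x ^ n * x = x * v" using mult_x_in_x_ideal by blast
  have "der_power (\<phi> x) a x N = x * (emb \<omega> * der_power (\<phi> x) a x (Suc n)) + a * x ^ n * x"
    unfolding n
    by (simp only: der_power.simps(2)[of _ _ _ "Suc n"] phi_x mult.assoc mult_emb_left[of x] power_Suc2)
  also have "\<dots> = x * (emb \<omega> * der_power (\<phi> x) a x (Suc n) + v)" by (simp only: v distrib_left)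
  finally show ?thesis by blast
qed

lemma homog_if_x_mult_homog: "x * w \<in> homog q \<Longrightarrow> w \<in> homog (q - 1)"
  using homog_coeff[of "x * w" q "Suc _"] by (fastforce simp: homog_def support_def coeff_x_mult)

lemma ex_hom_der_x_eq_y_power:
  assumes "N \<ge> 2" "\<omega> ^ (N - 1) = 1" "int (N - 1) * int k = l + 1"
  shows "\<exists>d\<in>hom_der emb N x y \<phi> l. d x = y ^ k"
proof -
  obtain w where w: "der_power (\<phi> x) (y ^ k) x N = x * w" using der_power_in_x_ideal[OF assms(1)] by blast
  obtain n where n: "N = Suc n" using assms(1) by (cases N) auto
  have "x * w \<in> homog (int (N - 1) * int k + int n)" using der_power_y_power_homog[of k n] w n by simp
  then have "w \<in> homog (int (N - 1) * int k + int n - 1)" by (rule homog_if_x_mult_homog)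
  moreover have "int (N - 1) * int k + int n - 1 = int (N - 1) + l" using assms(3) n by simp
  ultimately have "w \<in> homog (int (N - 1) + l)" by simp
  then obtain b where b: "b \<in> homog (int (N - 1) + l)" "x * w = qcomm \<omega> b"
    using x_mult_in_qcomm_image_homog omega_ne_1 by blast
  have "qcomm \<omega> b + \<phi> y * y ^ k - y ^ k * y = der_power (\<phi> x) (y ^ k) x N"
    unfolding phi_y assms(2) w b(2) by (simp add: power_commutes)
  then obtain d where d: "twisted_der emb \<phi> d" "d x = y ^ k" "d y = b"
    using ex_twisted_der by blast
  have "d x \<in> homog (1 + l)" using homog_xy_power[of 0 k] assms(3) by (simp add: d(2) add.commute)
  then have "d \<in> hom_der emb N x y \<phi> l"
    unfolding hom_der_iff using d twisted_der_homogI b(1) by blast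
  with d(2) show ?thesis by blast
qed

lemma hom_der_inner_if_not_y_power_degree:
  assumes "d \<in> hom_der emb N x y \<phi> l" "\<not> (l \<ge> -1 \<and> int (N - 1) dvd (l + 1))"
  shows "inner_twisted \<phi> d"
proof -
  have d: "twisted_der emb \<phi> d" and dx: "d x \<in> homog (1 + l)"
    using assms(1) homog_xy_power[of 1 0 1] unfolding hom_der_iff by simp_all
  have "coeff (d x) 0 j = 0" for j
  proof (rule ccontr)
    assume "coeff (d x) 0 j \<noteq> 0"
    from homog_coeff[OF dx this] have e: "l + 1 = int (N - 1) * int j" by simp
    moreover have "0 \<le> int (N - 1) * int j" by simp
    ultimately show False using assms(2) by (metis add.commute dvd_triv_left le_add_same_cancel1 minus_add_cancel)
  qed
  then have "y_part (d x) = 0" unfolding eq_0_iff_coeff coeff_y_part by simp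
  then show ?thesis using inner_twisted_iff_y_part_0[OF d] by simp
qed

lemma hom_der_quot_dim_1:
  assumes "N \<ge> 2" "\<omega> ^ (N - 1) = 1" "int (N - 1) * int k = l + 1"
  shows "has_quot_dim emb (hom_der emb N x y \<phi> l) (hom_inner emb N x y \<phi> l) 1"
proof -
  obtain D where D: "D \<in> hom_der emb N x y \<phi> l" "D x = y ^ k"
    using ex_hom_der_x_eq_y_power[OF assms] by blast
  have D_der: "twisted_der emb \<phi> D" using D(1) unfolding hom_der_iff by blast
  show ?thesis
  proof (rule has_quot_dim_1[OF D(1)])
    fix c assume "(\<lambda>u. emb c * D u) \<in> hom_inner emb N x y \<phi> l"
    then have "emb c * y ^ k = 0"
      using inner_twisted_iff_y_part_0[OF twisted_der_smult[OF D_der]]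
      unfolding hom_inner_def by (simp add: D(2) y_part_scale_y_power)
    then show "c = 0" using coeff_monomial[of c 0 k] by (simp add: coeff_0 fun_eq_iff) meson
  next
    fix f assume f: "f \<in> hom_der emb N x y \<phi> l"
    let ?c = "coeff (f x) 0 k"
    let ?h = "\<lambda>u. f u - emb ?c * D u"
    have f_der: "twisted_der emb \<phi> f" and "f x \<in> homog (1 + l)"
      using f homog_xy_power[of 1 0 1] unfolding hom_der_iff by simp_all
    then have "f x \<in> homog (int (N - 1) * int k)" using assms(3) by (simp add: add.commute)
    then have "y_part (?h x) = 0"
      using y_part_homog[OF assms(1)] by (simp add: y_part_diff y_part_scale_y_power D(2))
    moreover have h_der: "twisted_der emb \<phi> ?h"
      by (rule twisted_der_diff[OF f_der twisted_der_smult[OF D_der]])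
    ultimately have "inner_twisted \<phi> ?h" using inner_twisted_iff_y_part_0 by blast
    moreover have "?h \<in> hom_der emb N x y \<phi> l"
      using f D(1) h_der unfolding hom_der_iff by (blast intro: homog_diff homog_scale)
    ultimately show "\<exists>c. (\<lambda>u. f u - emb c * D u) \<in> hom_inner emb N x y \<phi> l"
      unfolding hom_inner_def by blast
  qed
qed

lemma hom_der_quot_dim:
  assumes "N \<ge> 2"
  shows "has_quot_dim emb (hom_der emb N x y \<phi> l) (hom_inner emb N x y \<phi> l)
    (if \<omega> ^ (N - 1) \<noteq> 1 then 0 else if l \<ge> -1 \<and> int (N - 1) dvd (l + 1) then 1 else 0)"
proof (cases "\<omega> ^ (N - 1) = 1 \<and> l \<ge> -1 \<and> int (N - 1) dvd (l + 1)")
  case True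
  then obtain q where q: "l + 1 = int (N - 1) * q" by blast
  have "0 \<le> int (N - 1) * q" using q True by linarith
  then have "q \<ge> 0" using assms by (auto simp: zero_le_mult_iff)
  with q have "int (N - 1) * int (nat q) = l + 1" by simp
  with True have "has_quot_dim emb (hom_der emb N x y \<phi> l) (hom_inner emb N x y \<phi> l) 1"
    using hom_der_quot_dim_1[OF assms] by blast
  with True show ?thesis by simp
next
  case False
  then have "inner_twisted \<phi> d" if "d \<in> hom_der emb N x y \<phi> l" for d
    using that twisted_der_inner_if_not_root[OF assms] hom_der_inner_if_not_y_power_degree
    unfolding hom_der_iff by blast
  then have "has_quot_dim emb (hom_der emb N x y \<phi> l) (hom_inner emb N x y \<phi> l) 0"
    by (intro has_quot_dim_0) (auto simp: hom_inner_def)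
  then show ?thesis using False by auto
qed

end

theorem proposition7p3:
  fixes emb :: "'k::field_char_0 \<Rightarrow> 'a::ring_1"
    and N :: nat and x y :: 'a and \<omega> :: 'k and \<phi> :: "'a \<Rightarrow> 'a"
  assumes "N \<ge> 1"
    and "is_A_N emb N x y"
    and "\<omega> \<noteq> 0" and "\<omega> \<noteq> 1"
    and "k_alg_aut emb \<phi>"
    and "\<phi> x = emb \<omega> * x" and "\<phi> y = emb (\<omega> ^ (N - 1)) * y"
  shows "(N = 1 \<longrightarrow> (\<forall>d. twisted_der emb \<phi> d \<longrightarrow> inner_twisted \<phi> d)) \<and>
         (N \<ge> 2 \<longrightarrow>
            (\<forall>l::int. has_quot_dim emb (hom_der emb N x y \<phi> l) (hom_inner emb N x y \<phi> l)
               (if \<omega> ^ (N - 1) \<noteq> 1 then 0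
                else if l \<ge> -1 \<and> int (N - 1) dvd (l + 1) then 1 else 0)))"
proof -
  interpret A_N_twist emb N x y \<omega> \<phi>
    using assms unfolding k_alg_aut_def by unfold_locales auto
  show ?thesis using twisted_der_inner_if_N_1 hom_der_quot_dim by blast
qed

end
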